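(* Let $\mathcal{Q}=\{\mathcal{Q}^1,\dots,\mathcal{Q}^M\}$ be a set of $M$ pairwise distinct valid token sequences, and run beam search of width $M$ on the language model under grounded constrained decoding with respect to $\mathcal{Q}$. Then the set of complete sequences returned by the beam search is exactly $\{\mathcal{Q}^1,\dots,\mathcal{Q}^M\}$.
   Context: An autoregressive language model has a finite vocabulary $\mathcal{V}$ containing an end-of-sequence token $\langle eos\rangle$; given a prefix $(t_0,\dots,t_i)$ (possibly empty) it outputs logits $(\ell_{i+1}^{(x)})_{x\in\mathcal{V}}$, all finite real numbers. Each valid sequence $\mathcal{Q}^k=(n_0,\dots,n_{Q_k})\in\mathcal{V}^{Q_k+1}$ has variable length and contains $\langle eos\rangle$ exactly once, as its last token; $\mathcal{Q}^k_{0:j}$ denotes its length-$j$ prefix. Grounded constrained decoding: after prefix $(t_0,\dots,t_i)$, the valid-next-token set is $M_{i+1}=\{t\in\mathcal{V}:\exists k,\ \mathcal{Q}^k_{0:i+2}=(t_0,\dots,t_i,t)\}$ (for the empty prefix, the set of first tokens of the $\mathcal{Q}^k$); masked logits are $\tilde\ell_{i+1}^{(x)}=\ell_{i+1}^{(x)}$ if $x\in M_{i+1}$ and $-\infty$ otherwise; the constrained next-token probability $\tilde p(\cdot\mid t_0,\dots,t_i)$ is their softmax with $\exp(-\infty)=0$ (all probabilities $0$ if $M_{i+1}=\emptyset$); the constrained probability $\tilde p$ of a sequence is the product of its constrained conditional next-token probabilities. A sequence is complete if it ends in $\langle eos\rangle$. Beam search of width $M$: start from the empty hypothesis; at each step,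 every incomplete hypothesis is extended by every token of $\mathcal{V}$, complete hypotheses are carried over unchanged, hypotheses with constrained probability $0$ are discarded, and among the remaining ones the (at most) $M$ with the highest constrained probability are kept; the procedure stops when all kept hypotheses are complete and returns them. *)

theory Defs
  imports Complex_Main
begin

text \<open>Vocabulary: a finite type 'v.  A language model is given by its logits
  L prefix x (finite reals).  Sequences are lists, the end-of-sequence token is eos.\<close>

definition valid_seq :: "'v \<Rightarrow> 'v list \<Rightarrow> bool" where
  "valid_seq eos q \<longleftrightarrow> q \<noteq> [] \<and> last q = eos \<and> eos \<notin> set (butlast q)"

definition complete :: "'v \<Rightarrow> 'v list \<Rightarrow> bool" where
  "complete eos h \<longleftrightarrow> h \<noteq> [] \<and> last h = eos"

definition valid_next :: "'v list set \<Rightarrow> 'v list \<Rightarrow> 'v set" where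
  "valid_next Q p = {t. \<exists>q\<in>Q. take (length p + 1) q = p @ [t]}"

definition cprob :: "('v list \<Rightarrow> 'v \<Rightarrow> real) \<Rightarrow> 'v list set \<Rightarrow> 'v list \<Rightarrow> 'v::finite \<Rightarrow> real" where
  "cprob L Q p t = (if t \<in> valid_next Q p
      then exp (L p t) / (\<Sum>x\<in>valid_next Q p. exp (L p x)) else 0)"

definition seq_prob :: "('v list \<Rightarrow> 'v \<Rightarrow> real) \<Rightarrow> 'v list set \<Rightarrow> 'v::finite list \<Rightarrow> real" where
  "seq_prob L Q s = (\<Prod>i<length s. cprob L Q (take i s) (s ! i))"

definition candidates :: "('v list \<Rightarrow> 'v \<Rightarrow> real) \<Rightarrow> 'v list set \<Rightarrow> 'v \<Rightarrow> 'v::finite list set \<Rightarrow> 'v list set" where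
  "candidates L Q eos B =
     {c. ((\<exists>h\<in>B. \<not> complete eos h \<and> (\<exists>t. c = h @ [t])) \<or> (c \<in> B \<and> complete eos c))
         \<and> seq_prob L Q c > 0}"

text \<open>One beam step of width M: keep (at most) M candidates of highest probability
  (ties broken arbitrarily, hence a relation).\<close>
definition beam_step :: "('v list \<Rightarrow> 'v \<Rightarrow> real) \<Rightarrow> 'v list set \<Rightarrow> 'v \<Rightarrow> nat
     \<Rightarrow> 'v::finite list set \<Rightarrow> 'v list set \<Rightarrow> bool" where
  "beam_step L Q eos M B B' \<longleftrightarrow>
     (let C = candidates L Q eos B in
       B' \<subseteq> C \<and> card B' = min M (card C) \<and>
       (\<forall>x\<in>B'. \<forall>y\<in>C - B'. seq_prob L Q y \<le> seq_prob L Q x))"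

inductive beam_reach :: "('v list \<Rightarrow> 'v \<Rightarrow> real) \<Rightarrow> 'v list set \<Rightarrow> 'v \<Rightarrow> nat
     \<Rightarrow> nat \<Rightarrow> 'v::finite list set \<Rightarrow> bool"
  for L Q eos M where
  init: "beam_reach L Q eos M 0 {[]}"
| step: "beam_reach L Q eos M n B \<Longrightarrow> \<not> (\<forall>h\<in>B. complete eos h) \<Longrightarrow>
         beam_step L Q eos M B B' \<Longrightarrow> beam_reach L Q eos M (Suc n) B'"

end

theory Submission
  imports Defs
begin

text \<open>A positive constrained probability forces every prefix of a hypothesis to be a
  prefix of some sequence of \<open>Q\<close>, so the candidates after \<open>n\<close> steps are exactly the
  length-\<open>(n+1)\<close> truncations of the sequences in \<open>Q\<close>. There are at most \<open>card Q = M\<close>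
  of them, so each beam step keeps all candidates and the beam after \<open>n \<ge> 1\<close> steps is
  forced to be the set of length-\<open>n\<close> truncations. Since every sequence of \<open>Q\<close> ends with
  its only \<open>eos\<close>, a truncation is complete iff it is the whole sequence; the search
  therefore stops exactly when \<open>n\<close> reaches the maximal length, returning \<open>Q\<close>.\<close>

definition truncations :: "'a list set \<Rightarrow> nat \<Rightarrow> 'a list set" where
  "truncations Q n = take n ` Q"

text \<open>The beam forced after \<open>n\<close> steps. The initial beam is \<open>{[]}\<close> even when
  \<open>Q = {}\<close>, where \<open>truncations Q 0\<close> would be empty.\<close>
definition grounded_beam :: "'a list set \<Rightarrow> nat \<Rightarrow> 'a list set" where
  "grounded_beam Q n = (if n = 0 then {[]} else truncations Q n)"

lemma complete_take_iff:
  assumes "valid_seq eos q"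
  shows "complete eos (take n q) \<longleftrightarrow> length q \<le> n"
proof
  assume "length q \<le> n"
  then show "complete eos (take n q)" using assms by (simp add: valid_seq_def complete_def)
next
  assume complete: "complete eos (take n q)"
  show "length q \<le> n"
  proof (rule ccontr)
    assume "\<not> length q \<le> n"
    then have "take n q = take n (butlast q)" by (simp add: take_butlast)
    moreover have "take n q \<noteq> []" using complete by (simp add: complete_def)
    ultimately have "last (take n q) \<in> set (butlast q)"
      by (metis last_in_set in_set_takeD)
    then show False using complete assms by (simp add: complete_def valid_seq_def)
  qed
qed

lemma cprob_nonneg: "0 \<le> cprob L Q p t"
  unfolding cprob_def by (auto intro!: divide_nonneg_nonneg sum_nonneg)

lemma cprob_pos_iff: "0 < cprob L Q p t \<longleftrightarrow> t \<in> valid_next Q p"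
proof
  assume t: "t \<in> valid_next Q p"
  then have "0 < (\<Sum>x\<in>valid_next Q p. exp (L p x))" by (intro sum_pos) auto
  with t show "0 < cprob L Q p t" by (simp add: cprob_def)
qed (auto simp: cprob_def split: if_splits)

lemma seq_prob_nonneg: "0 \<le> seq_prob L Q s"
  unfolding seq_prob_def by (intro prod_nonneg) (simp add: cprob_nonneg)

lemma seq_prob_snoc: "seq_prob L Q (s @ [t]) = seq_prob L Q s * cprob L Q s t"
proof -
  have "(\<Prod>i<length s. cprob L Q (take i (s @ [t])) ((s @ [t]) ! i))
      = (\<Prod>i<length s. cprob L Q (take i s) (s ! i))"
    by (intro prod.cong) (simp_all add: nth_append)
  then show ?thesis by (simp add: seq_prob_def)
qed

lemma seq_prob_pos_iff:
  "0 < seq_prob L Q s \<longleftrightarrow> s = [] \<or> (\<exists>q\<in>Q. take (length s) q = s)"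
proof (induction s rule: rev_induct)
  case Nil
  show ?case by (simp add: seq_prob_def)
next
  case (snoc t s)
  have extends: "(\<exists>q\<in>Q. take (length s) q = s)" if "t \<in> valid_next Q s"
  proof -
    from that obtain q where "q \<in> Q" "take (Suc (length s)) q = s @ [t]"
      by (auto simp: valid_next_def)
    then have "take (length s) (take (Suc (length s)) q) = take (length s) (s @ [t])"
      by simp
    then have "take (length s) q = s" by simp
    with \<open>q \<in> Q\<close> show ?thesis by blast
  qed
  have "0 < seq_prob L Q (s @ [t]) \<longleftrightarrow> 0 < seq_prob L Q s \<and> t \<in> valid_next Q s"
    using seq_prob_nonneg[of L Q s] cprob_nonneg[of L Q s t] cprob_pos_iff[of L Q s t]
    by (auto simp: seq_prob_snoc zero_less_mult_iff)
  also have "\<dots> \<longleftrightarrow> t \<in> valid_next Q s"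
    using snoc.IH extends by blast
  finally show ?case by (simp add: valid_next_def)
qed

lemma truncations_eq_self: "\<forall>q\<in>Q. length q \<le> n \<Longrightarrow> truncations Q n = Q"
  unfolding truncations_def by (simp cong: image_cong)

lemma card_truncations_le: "finite Q \<Longrightarrow> card (truncations Q n) \<le> card Q"
  unfolding truncations_def by (rule card_image_le)

lemma all_complete_grounded_beam_iff:
  assumes "\<forall>q\<in>Q. valid_seq eos q"
  shows "(\<forall>h\<in>grounded_beam Q n. complete eos h) \<longleftrightarrow> 0 < n \<and> (\<forall>q\<in>Q. length q \<le> n)"
  using assms by (auto simp: grounded_beam_def truncations_def complete_take_iff
      complete_def[of _ "[]"])

lemma take_mem_grounded_beam: "q \<in> Q \<Longrightarrow> take n q \<in> grounded_beam Q n"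
  by (simp add: grounded_beam_def truncations_def)

lemma incomplete_mem_grounded_beam:
  assumes "\<forall>q\<in>Q. valid_seq eos q" "h \<in> grounded_beam Q n" "\<not> complete eos h"
  shows "length h = n"
  using assms by (auto simp: grounded_beam_def truncations_def complete_take_iff split: if_splits)

lemma complete_mem_grounded_beam:
  assumes "\<forall>q\<in>Q. valid_seq eos q" "h \<in> grounded_beam Q n" "complete eos h"
  shows "h \<in> Q" "length h \<le> n"
  using assms by (auto simp: grounded_beam_def truncations_def complete_take_iff complete_def[of _ "[]"]
      split: if_splits)

lemma candidates_grounded_beam:
  assumes valid: "\<forall>q\<in>Q. valid_seq eos q"
  shows "candidates L Q eos (grounded_beam Q n) = truncations Q (Suc n)"
proof (intro equalityI subsetI)
  fix c assume c: "c \<in> candidates L Q eos (grounded_beam Q n)"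
  then have pos: "0 < seq_prob L Q c" by (simp add: candidates_def)
  from c consider
      h t where "h \<in> grounded_beam Q n" "\<not> complete eos h" "c = h @ [t]"
    | "c \<in> grounded_beam Q n" "complete eos c"
    by (auto simp: candidates_def)
  then show "c \<in> truncations Q (Suc n)"
  proof cases
    case (1 h t)
    with valid have "length c = Suc n" by (simp add: incomplete_mem_grounded_beam)
    with pos 1 obtain q where "q \<in> Q" "take (Suc n) q = c" by (auto simp: seq_prob_pos_iff)
    then show ?thesis by (auto simp: truncations_def)
  next
    case 2
    with valid have "c \<in> Q" "length c \<le> Suc n" by (auto dest: complete_mem_grounded_beam)
    then show ?thesis by (force simp: truncations_def)
  qed
next
  fix c assume "c \<in> truncations Q (Suc n)"
  then obtain q where q: "q \<in> Q" "c = take (Suc n) q" by (auto simp: truncations_def)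
  with valid have qv: "valid_seq eos q" by simp
  then have "q \<noteq> []" by (simp add: valid_seq_def)
  moreover have "take (length c) q = c" using q by (simp add: min_def)
  ultimately have pos: "0 < seq_prob L Q c" using q by (auto simp: seq_prob_pos_iff)
  show "c \<in> candidates L Q eos (grounded_beam Q n)"
  proof (cases "length q \<le> n")
    case True
    with q have "c \<in> grounded_beam Q n" "complete eos c"
      using take_mem_grounded_beam[of q Q n] qv by (simp_all add: valid_seq_def complete_def)
    with pos show ?thesis by (simp add: candidates_def)
  next
    case False
    with q have "\<not> complete eos (take n q)" "c = take n q @ [q ! n]"
      by (simp_all add: complete_take_iff[OF qv] take_Suc_conv_app_nth)
    with q pos take_mem_grounded_beam[of q Q n] show ?thesis
      unfolding candidates_def by blast
  qed
qed

text \<open>There are at most \<open>M\<close> candidates, so a step of width \<open>M\<close> must keep all of them.\<close>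
lemma beam_step_grounded_beam_iff:
  assumes "finite Q" "card Q = M" "\<forall>q\<in>Q. valid_seq eos q"
  shows "beam_step L Q eos M (grounded_beam Q n) B' \<longleftrightarrow> B' = grounded_beam Q (Suc n)"
proof -
  let ?C = "truncations Q (Suc n)"
  have "finite ?C" "card ?C \<le> M"
    using assms card_truncations_le by (auto simp: truncations_def)
  then show ?thesis
    unfolding beam_step_def Let_def candidates_grounded_beam[OF assms(3)]
    by (auto simp: grounded_beam_def dest: card_subset_eq)
qed

lemma beam_reach_imp_grounded_beam:
  assumes "finite Q" "card Q = M" "\<forall>q\<in>Q. valid_seq eos q"
    and "beam_reach L Q eos M n B"
  shows "B = grounded_beam Q n"
  using assms(4)
proof induction
  case init
  show ?case by (simp add: grounded_beam_def)
next
  case (step n B B')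
  then show ?case by (simp add: beam_step_grounded_beam_iff[OF assms(1-3)])
qed

lemma beam_reach_grounded_beam:
  assumes "finite Q" "card Q = M" "\<forall>q\<in>Q. valid_seq eos q"
    and "\<forall>k<m. \<not> (\<forall>h\<in>grounded_beam Q k. complete eos h)"
  shows "beam_reach L Q eos M m (grounded_beam Q m)"
  using assms(4)
proof (induction m)
  case 0
  show ?case by (simp add: grounded_beam_def beam_reach.init)
next
  case (Suc m)
  then show ?case
    by (intro beam_reach.step[of _ _ _ _ m "grounded_beam Q m"])
      (simp_all add: beam_step_grounded_beam_iff[OF assms(1-3)])
qed

lemma beam_reach_length_le:
  assumes "finite Q" "card Q = M" "\<forall>q\<in>Q. valid_seq eos q"
    and "\<forall>q\<in>Q. length q \<le> K" "beam_reach L Q eos M n B"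
  shows "n \<le> Suc K"
  using assms(5)
proof cases
  case (step m B\<^sub>0)
  then have "\<not> (\<forall>h\<in>grounded_beam Q m. complete eos h)"
    using beam_reach_imp_grounded_beam[OF assms(1-3)] by blast
  then have "m \<le> K"
    using assms(4) by (auto simp: all_complete_grounded_beam_iff[OF assms(3)])
  with step show ?thesis by simp
qed simp

lemma beam_reach_complete_exists:
  assumes "finite Q" "card Q = M" "\<forall>q\<in>Q. valid_seq eos q"
    and "\<forall>q\<in>Q. length q \<le> K"
  shows "\<exists>n B. beam_reach L Q eos M n B \<and> (\<forall>h\<in>B. complete eos h)"
proof -
  let ?finished = "\<lambda>n. \<forall>h\<in>grounded_beam Q n. complete eos h"
  define m where "m = (LEAST n. ?finished n)"
  have "?finished (Suc K)"
    using assms(4) by (auto simp: all_complete_grounded_beam_iff[OF assms(3)])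
  then have finished: "?finished m" unfolding m_def by (rule LeastI)
  have "\<forall>k<m. \<not> ?finished k" unfolding m_def by (blast dest: not_less_Least)
  then have "beam_reach L Q eos M m (grounded_beam Q m)"
    by (rule beam_reach_grounded_beam[OF assms(1-3)])
  with finished show ?thesis by blast
qed

lemma beam_reach_complete_eq:
  assumes "finite Q" "card Q = M" "\<forall>q\<in>Q. valid_seq eos q"
    and "beam_reach L Q eos M n B" "\<forall>h\<in>B. complete eos h"
  shows "B = Q"
proof -
  have B: "B = grounded_beam Q n" using beam_reach_imp_grounded_beam[OF assms(1-4)] .
  with assms(5) have "0 < n" "\<forall>q\<in>Q. length q \<le> n"
    by (simp_all add: all_complete_grounded_beam_iff[OF assms(3)])
  with B show ?thesis by (simp add: grounded_beam_def truncations_eq_self)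
qed

theorem lemma1p3:
  fixes L :: "'v::finite list \<Rightarrow> 'v \<Rightarrow> real"
    and eos :: 'v
    and Q :: "'v list set"
    and M :: nat
  assumes "finite Q"
    and "card Q = M"
    and "\<forall>q\<in>Q. valid_seq eos q"
  shows "(\<exists>N. \<forall>n B. beam_reach L Q eos M n B \<longrightarrow> n \<le> N)
       \<and> (\<exists>n B. beam_reach L Q eos M n B \<and> (\<forall>h\<in>B. complete eos h))
       \<and> (\<forall>n B. beam_reach L Q eos M n B \<and> (\<forall>h\<in>B. complete eos h) \<longrightarrow> B = Q)"
proof -
  obtain K where K: "\<forall>q\<in>Q. length q \<le> K"
    using assms(1) finite_nat_set_iff_bounded_le[of "length ` Q"] by auto
  show ?thesis
    using beam_reach_length_le[OF assms K] beam_reach_complete_exists[OF assms K]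
      beam_reach_complete_eq[OF assms] by blast
qed

end
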